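(* Let $(X,\tau,\le)$ be a Noetherian Priestley space and $f\colon X\setminus I(f)\to X$ a partially continuous self-map such that $I(f)$ is clopen. Then $h_{\mathrm{top}}(f)=0$. In particular, the topological entropy of any continuous self-map of a Noetherian Priestley space is $0$.
   Context: A Priestley space is a partially ordered set $(X,\le)$ with a quasi-compact topology such that whenever $y\not\le x$ there is a clopen down-set containing $x$ but not $y$; it is compact Hausdorff. It is Noetherian if every decreasing sequence of closed down-sets is eventually stationary. No order-preservation of $f$ is assumed. A partially continuous self-map is a continuous map $f\colon X\setminus I(f)\to X$ with $I(f)\subset X$ closed. Its entropy: put $\xi_0=X$, $\xi_n=\{x\in X\setminus I(f): f(x)\in\xi_{n-1}\}$; for a symmetric entourage $\mathcal E$ of the canonical uniform structure (all neighbourhoods of the diagonal) and $x\in\xi_n$, $B^n_{\mathcal E}(x)=\{y\in\xi_n:(f^i(x),f^i(y))\in\mathcal E, 0\le i\le n\}$; $S(n,\mathcal E)$ is the maximal cardinality of $E\subset\xi_n$ with $x\notin B^n_{\mathcal E}(y)$ for distinct $x,y\in E$; $h_{\mathrm{top}}(f)=\sup_{\mathcal E}\limsup_n\frac1n\log S(n,\mathcal E)$ (and $-\infty$ if some $\xi_n$ is empty). For continuous $f$ ($I(f)=\emptyset$) this is the usual topological entropy. *)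

theory Defs
  imports "HOL-Analysis.Analysis" "HOL-Library.Extended_Real"
begin

definition partial_order_rel :: "'a set \<Rightarrow> ('a \<Rightarrow> 'a \<Rightarrow> bool) \<Rightarrow> bool" where
  "partial_order_rel X le \<longleftrightarrow>
     (\<forall>x\<in>X. le x x) \<and>
     (\<forall>x\<in>X. \<forall>y\<in>X. le x y \<and> le y x \<longrightarrow> x = y) \<and>
     (\<forall>x\<in>X. \<forall>y\<in>X. \<forall>z\<in>X. le x y \<and> le y z \<longrightarrow> le x z)"

definition is_downset :: "'a set \<Rightarrow> ('a \<Rightarrow> 'a \<Rightarrow> bool) \<Rightarrow> 'a set \<Rightarrow> bool" where
  "is_downset X le D \<longleftrightarrow> D \<subseteq> X \<and> (\<forall>x\<in>D. \<forall>y\<in>X. le y x \<longrightarrow> y \<in> D)"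

definition priestley_space :: "'a topology \<Rightarrow> ('a \<Rightarrow> 'a \<Rightarrow> bool) \<Rightarrow> bool" where
  "priestley_space T le \<longleftrightarrow>
     partial_order_rel (topspace T) le \<and> compact_space T \<and>
     (\<forall>x\<in>topspace T. \<forall>y\<in>topspace T. \<not> le y x \<longrightarrow>
        (\<exists>U. openin T U \<and> closedin T U \<and> is_downset (topspace T) le U \<and> x \<in> U \<and> y \<notin> U))"

definition noetherian_space :: "'a topology \<Rightarrow> ('a \<Rightarrow> 'a \<Rightarrow> bool) \<Rightarrow> bool" where
  "noetherian_space T le \<longleftrightarrow>
     (\<forall>F :: nat \<Rightarrow> 'a set.
        (\<forall>n. closedin T (F n) \<and> is_downset (topspace T) le (F n)) \<and> (\<forall>n. F (Suc n) \<subseteq> F n)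
        \<longrightarrow> (\<exists>N. \<forall>n\<ge>N. F n = F N))"

definition partially_continuous :: "'a topology \<Rightarrow> ('a \<Rightarrow> 'a) \<Rightarrow> 'a set \<Rightarrow> bool" where
  "partially_continuous T f I \<longleftrightarrow>
     closedin T I \<and> continuous_map (subtopology T (topspace T - I)) T f"

primrec xi :: "'a topology \<Rightarrow> ('a \<Rightarrow> 'a) \<Rightarrow> 'a set \<Rightarrow> nat \<Rightarrow> 'a set" where
  "xi T f I 0 = topspace T"
| "xi T f I (Suc n) = {x \<in> topspace T - I. f x \<in> xi T f I n}"

text \<open>Symmetric entourages of the canonical uniformity: symmetric neighbourhoods of the diagonal.\<close>
definition sym_entourage :: "'a topology \<Rightarrow> ('a \<times> 'a) set \<Rightarrow> bool" where
  "sym_entourage T E \<longleftrightarrow> E \<subseteq> topspace T \<times> topspace T \<and>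
     (\<forall>x y. (x, y) \<in> E \<longrightarrow> (y, x) \<in> E) \<and>
     (\<exists>U. openin (prod_topology T T) U \<and> (\<lambda>x. (x, x)) ` topspace T \<subseteq> U \<and> U \<subseteq> E)"

definition bowen_ball :: "'a topology \<Rightarrow> ('a \<Rightarrow> 'a) \<Rightarrow> 'a set \<Rightarrow> nat \<Rightarrow> ('a \<times> 'a) set \<Rightarrow> 'a \<Rightarrow> 'a set" where
  "bowen_ball T f I n E x = {y \<in> xi T f I n. \<forall>i\<le>n. ((f ^^ i) x, (f ^^ i) y) \<in> E}"

definition sep_num :: "'a topology \<Rightarrow> ('a \<Rightarrow> 'a) \<Rightarrow> 'a set \<Rightarrow> nat \<Rightarrow> ('a \<times> 'a) set \<Rightarrow> ereal" where
  "sep_num T f I n E = Sup {ereal (real (card F)) | F. finite F \<and> F \<subseteq> xi T f I n \<and>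
      (\<forall>x\<in>F. \<forall>y\<in>F. x \<noteq> y \<longrightarrow> x \<notin> bowen_ball T f I n E y)}"

definition growth_term :: "'a topology \<Rightarrow> ('a \<Rightarrow> 'a) \<Rightarrow> 'a set \<Rightarrow> ('a \<times> 'a) set \<Rightarrow> nat \<Rightarrow> ereal" where
  "growth_term T f I E n =
     (if sep_num T f I n E = \<infinity> then \<infinity>
      else ereal (ln (real_of_ereal (sep_num T f I n E)) / real n))"

definition htop :: "'a topology \<Rightarrow> ('a \<Rightarrow> 'a) \<Rightarrow> 'a set \<Rightarrow> ereal" where
  "htop T f I = (if \<exists>n. xi T f I n = {} then -\<infinity>
     else (SUP E \<in> {E. sym_entourage T E}. limsup (growth_term T f I E)))"

end

(*
  A Noetherian Priestley space is scattered: among the closed down-sets generated by the clopen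
  pieces Y \<inter> K of a nonempty closed set Y choose a minimal one; the Priestley separation axiom
  then forces Y \<inter> K to be a single point, which is therefore isolated in Y.

  Fix an entourage E. The atoms of a finite clopen cover by E-small sets code every point by a
  letter, and since I is clopen, itineraries (sequences of letters along the orbit, padded once
  the orbit enters I) have open level sets. Distinct points of an (n, E)-separated set have
  distinct itineraries of length n + 1, so it suffices that the number of itineraries grows
  subexponentially. If it grew at some rate c > 0, Zorn's lemma and compactness would give a
  minimal closed forward-invariant set Y with at least e^(c m) itineraries of every length m.
  Cutting itineraries into blocks of length m shows that the points of Y having a neighbourhood
  of slower growth carry all but few m-itineraries, so the remaining points form a set of the
  same kind, hence all of Y by minimality. An isolated point of Y contradicts this.
*)
theory Submission
  imports Defs
begin

section \<open>Noetherian Priestley spaces\<close>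

lemma compactin_clopen_cover_avoiding:
  assumes "compactin T S"
    and "\<And>s. s \<in> S \<Longrightarrow> \<exists>U. openin T U \<and> closedin T U \<and> s \<in> U \<and> w \<notin> U \<and> Q U"
    and "Q {}" and "\<And>A B. Q A \<Longrightarrow> Q B \<Longrightarrow> Q (A \<union> B)"
  shows "\<exists>U. openin T U \<and> closedin T U \<and> S \<subseteq> U \<and> w \<notin> U \<and> Q U"
proof -
  define \<U> where "\<U> = {U. openin T U \<and> closedin T U \<and> w \<notin> U \<and> Q U}"
  have "S \<subseteq> \<Union>\<U>"
  proof
    fix s assume "s \<in> S"
    then obtain U where "openin T U \<and> closedin T U \<and> s \<in> U \<and> w \<notin> U \<and> Q U"
      using assms(2) by blast
    then show "s \<in> \<Union>\<U>" unfolding \<U>_def by blast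
  qed
  then obtain \<V> where \<V>: "finite \<V>" "\<V> \<subseteq> \<U>" "S \<subseteq> \<Union>\<V>"
    using compactinD[OF assms(1)] unfolding \<U>_def by (metis (no_types, lifting) mem_Collect_eq)
  have "\<Union>\<V> \<in> \<U>"
    using \<V>(1,2)
  proof (induction rule: finite_induct)
    case empty
    then show ?case unfolding \<U>_def using assms(3) by simp
  next
    case (insert V \<V>)
    then show ?case unfolding \<U>_def by (simp add: openin_Un closedin_Un assms(4))
  qed
  then show ?thesis using \<V>(3) unfolding \<U>_def by blast
qed

lemma clopen_cover_code:
  assumes "finite \<V>" "\<And>K. K \<in> \<V> \<Longrightarrow> openin T K \<and> closedin T K"
  shows "finite (range (\<lambda>x. {K \<in> \<V>. x \<in> K}))"
    and "openin T {x \<in> topspace T. {K \<in> \<V>. x \<in> K} = b}"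
proof -
  show "finite (range (\<lambda>x. {K \<in> \<V>. x \<in> K}))"
    by (rule finite_subset[of _ "Pow \<V>"]) (use assms(1) in auto)
  show "openin T {x \<in> topspace T. {K \<in> \<V>. x \<in> K} = b}"
  proof (cases "b \<subseteq> \<V>")
    case True
    define C where "C = (\<Union>K\<in>b. topspace T - K) \<union> \<Union>(\<V> - b)"
    have "closedin T C"
      unfolding C_def using True assms finite_subset[OF True assms(1)]
      by (intro closedin_Un closedin_Union) (auto intro: closedin_diff)
    moreover have "{x \<in> topspace T. {K \<in> \<V>. x \<in> K} = b} = topspace T - C"
      using True unfolding C_def by blast
    ultimately show ?thesis by (simp add: openin_diff)
  next
    case False
    then have "{x \<in> topspace T. {K \<in> \<V>. x \<in> K} = b} = {}" by blast
    then show ?thesis by (metis openin_empty)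
  qed
qed

definition down :: "'a topology \<Rightarrow> ('a \<Rightarrow> 'a \<Rightarrow> bool) \<Rightarrow> 'a set \<Rightarrow> 'a set" where
  "down T le S = {w \<in> topspace T. \<exists>s\<in>S. le w s}"

lemma noetherian_minimal_closed_downset:
  assumes "noetherian_space T le" and "\<A> \<noteq> {}"
    and "\<And>D. D \<in> \<A> \<Longrightarrow> closedin T D \<and> is_downset (topspace T) le D"
  shows "\<exists>D\<in>\<A>. \<forall>D'\<in>\<A>. D' \<subseteq> D \<longrightarrow> D' = D"
proof -
  have "wf {(D', D). D' \<in> \<A> \<and> D \<in> \<A> \<and> D' \<subseteq> D \<and> D' \<noteq> D}" (is "wf ?R")
    unfolding wf_iff_no_infinite_down_chain
  proof
    assume "\<exists>F. \<forall>i. (F (Suc i), F i) \<in> ?R"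
    then obtain F where "\<forall>i. (F (Suc i), F i) \<in> ?R" ..
    then have F: "F i \<in> \<A>" "F (Suc i) \<subseteq> F i" "F (Suc i) \<noteq> F i" for i
      by auto
    have "\<forall>n. closedin T (F n) \<and> is_downset (topspace T) le (F n)"
      using F(1) assms(3) by blast
    moreover have "\<forall>n. F (Suc n) \<subseteq> F n"
      using F(2) by blast
    moreover have "(\<forall>n. closedin T (F n) \<and> is_downset (topspace T) le (F n)) \<and>
        (\<forall>n. F (Suc n) \<subseteq> F n) \<longrightarrow> (\<exists>N. \<forall>n\<ge>N. F n = F N)"
      using assms(1) unfolding noetherian_space_def by (rule spec)
    ultimately obtain N where "\<forall>n\<ge>N. F n = F N"
      by blast
    then have "F (Suc N) = F N" using le_SucI[OF order_refl] by blast
    then show False using F(3) by blast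
  qed
  then obtain D where "D \<in> \<A>" "\<And>D'. (D', D) \<in> ?R \<Longrightarrow> D' \<notin> \<A>"
    by (rule wfE_min'[OF _ assms(2)]) blast
  then show ?thesis by blast
qed

definition scattered_space :: "'a topology \<Rightarrow> bool" where
  "scattered_space T \<longleftrightarrow> (\<forall>Y. closedin T Y \<and> Y \<noteq> {} \<longrightarrow> (\<exists>y V. openin T V \<and> V \<inter> Y = {y}))"

context
  fixes T :: "'a topology" and le :: "'a \<Rightarrow> 'a \<Rightarrow> bool"
  assumes priestley: "priestley_space T le"
begin

lemma priestley_compact: "compact_space T"
  using priestley unfolding priestley_space_def by blast

lemma priestley_order:
  "x \<in> topspace T \<Longrightarrow> le x x"
  "x \<in> topspace T \<Longrightarrow> y \<in> topspace T \<Longrightarrow> le x y \<Longrightarrow> le y x \<Longrightarrow> x = y"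
  "x \<in> topspace T \<Longrightarrow> y \<in> topspace T \<Longrightarrow> z \<in> topspace T \<Longrightarrow> le x y \<Longrightarrow> le y z \<Longrightarrow> le x z"
  using priestley unfolding priestley_space_def partial_order_rel_def by blast+

lemma priestley_separation:
  "x \<in> topspace T \<Longrightarrow> y \<in> topspace T \<Longrightarrow> \<not> le y x \<Longrightarrow>
     \<exists>U. openin T U \<and> closedin T U \<and> is_downset (topspace T) le U \<and> x \<in> U \<and> y \<notin> U"
  using priestley unfolding priestley_space_def by blast

lemma priestley_clopen_separation:
  assumes "x \<in> topspace T" "y \<in> topspace T" "x \<noteq> y"
  shows "\<exists>U. openin T U \<and> closedin T U \<and> x \<in> U \<and> y \<notin> U"
proof (cases "le y x")
  case False
  then show ?thesis using priestley_separation[OF assms(1,2)] by blast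
next
  case True
  then have "\<not> le x y" using priestley_order(2) assms by blast
  then obtain U where "openin T U" "closedin T U" "y \<in> U" "x \<notin> U"
    using priestley_separation[OF assms(2,1)] by blast
  then show ?thesis
    using assms by (intro exI[of _ "topspace T - U"]) (auto intro: openin_diff closedin_diff)
qed

lemma priestley_clopen_nbhd:
  assumes "openin T A" "x \<in> A"
  shows "\<exists>K. openin T K \<and> closedin T K \<and> x \<in> K \<and> K \<subseteq> A"
proof -
  have x: "x \<in> topspace T" using assms openin_subset by blast
  have "compactin T (topspace T - A)"
    using assms(1) by (intro closedin_compact_space priestley_compact) auto
  then have "\<exists>U. openin T U \<and> closedin T U \<and> topspace T - A \<subseteq> U \<and> x \<notin> U \<and> True"
    by (rule compactin_clopen_cover_avoiding) (use priestley_clopen_separation x assms in auto)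
  then obtain U where "openin T U" "closedin T U" "topspace T - A \<subseteq> U" "x \<notin> U"
    by blast
  then show ?thesis
    using x by (intro exI[of _ "topspace T - U"]) (auto intro: openin_diff closedin_diff)
qed

lemma is_downset_down: "S \<subseteq> topspace T \<Longrightarrow> is_downset (topspace T) le (down T le S)"
  unfolding is_downset_def down_def using priestley_order(3) by blast

lemma closedin_down:
  assumes "closedin T S"
  shows "closedin T (down T le S)"
proof -
  have "\<exists>V. openin T V \<and> w \<in> V \<and> V \<subseteq> topspace T - down T le S"
    if w: "w \<in> topspace T - down T le S" for w
  proof -
    have "\<exists>U. openin T U \<and> closedin T U \<and> S \<subseteq> U \<and> w \<notin> U \<and> is_downset (topspace T) le U"
    proof (rule compactin_clopen_cover_avoiding)
      show "compactin T S" using assms by (rule closedin_compact_space[OF priestley_compact])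
      show "\<exists>U. openin T U \<and> closedin T U \<and> s \<in> U \<and> w \<notin> U \<and> is_downset (topspace T) le U"
        if "s \<in> S" for s
        using priestley_separation[of s w] that w closedin_subset[OF assms] unfolding down_def by blast
    qed (auto simp: is_downset_def)
    then obtain U where "openin T U" "closedin T U" "S \<subseteq> U" "w \<notin> U" "is_downset (topspace T) le U"
      by blast
    then show ?thesis
      using w unfolding down_def is_downset_def by (intro exI[of _ "topspace T - U"]) auto
  qed
  then show ?thesis
    unfolding closedin_def down_def by (subst openin_subopen) auto
qed

lemma noetherian_priestley_scattered:
  assumes "noetherian_space T le"
  shows "scattered_space T"
  unfolding scattered_space_def
proof (intro allI impI, elim conjE)
  fix Y assume Y: "closedin T Y" "Y \<noteq> {}"
  have YX: "Y \<subseteq> topspace T" using Y closedin_subset by blast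
  define \<A> where "\<A> = {down T le (Y \<inter> K) | K. openin T K \<and> closedin T K \<and> Y \<inter> K \<noteq> {}}"
  have "down T le (Y \<inter> topspace T) \<in> \<A>" unfolding \<A>_def using Y YX by blast
  moreover have "closedin T D \<and> is_downset (topspace T) le D" if "D \<in> \<A>" for D
    using that Y YX unfolding \<A>_def by (auto intro!: closedin_down is_downset_down)
  ultimately obtain D where D: "D \<in> \<A>" and D_min: "\<forall>D'\<in>\<A>. D' \<subseteq> D \<longrightarrow> D' = D"
    using noetherian_minimal_closed_downset[OF assms] by blast
  then obtain K where K: "openin T K" "closedin T K" "Y \<inter> K \<noteq> {}" and DK: "D = down T le (Y \<inter> K)"
    unfolding \<A>_def by blast
  have below: "le w y" if y: "y \<in> Y \<inter> K" and w: "w \<in> D" for y w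
  proof (rule ccontr)
    assume "\<not> le w y"
    moreover have wX: "w \<in> topspace T" using w DK unfolding down_def by blast
    ultimately obtain U where U: "openin T U" "closedin T U" "is_downset (topspace T) le U" "y \<in> U" "w \<notin> U"
      using priestley_separation[of y w] y YX by blast
    have "down T le (Y \<inter> (K \<inter> U)) \<in> \<A>"
      unfolding \<A>_def using K U y by (blast intro: openin_Int closedin_Int)
    moreover have "down T le (Y \<inter> (K \<inter> U)) \<subseteq> D" unfolding DK down_def by blast
    ultimately have "w \<in> down T le (Y \<inter> (K \<inter> U))" using D_min w by blast
    then show False using U(3,5) wX unfolding down_def is_downset_def by blast
  qed
  obtain y where y: "y \<in> Y \<inter> K" using K by blast
  have "Y \<inter> K = {y}"
  proof (intro equalityI subsetI)
    fix z assume z: "z \<in> Y \<inter> K"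
    have "z \<in> D" "y \<in> D" unfolding DK down_def using z y YX priestley_order(1) by auto
    then show "z \<in> {y}" using below z y YX priestley_order(2) by blast
  qed (use y in blast)
  then show "\<exists>y V. openin T V \<and> V \<inter> Y = {y}" using K(1) by blast
qed

lemma priestley_entourage_clopen_cover:
  assumes "sym_entourage T E"
  obtains \<V> where "finite \<V>" "topspace T \<subseteq> \<Union>\<V>"
    "\<And>K. K \<in> \<V> \<Longrightarrow> openin T K \<and> closedin T K \<and> K \<times> K \<subseteq> E"
proof -
  obtain U where U: "openin (prod_topology T T) U" "(\<lambda>x. (x, x)) ` topspace T \<subseteq> U" "U \<subseteq> E"
    using assms unfolding sym_entourage_def by blast
  define \<K> where "\<K> = {K. openin T K \<and> closedin T K \<and> K \<times> K \<subseteq> E}"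
  have cover: "topspace T \<subseteq> \<Union>\<K>"
  proof
    fix x assume "x \<in> topspace T"
    then have "(x, x) \<in> U" using U(2) by blast
    then obtain A B where AB: "openin T A" "openin T B" "x \<in> A" "x \<in> B" "A \<times> B \<subseteq> U"
      using U(1)[unfolded openin_prod_topology_alt, rule_format, of x x] by blast
    then obtain K where K: "openin T K" "closedin T K" "x \<in> K" "K \<subseteq> A \<inter> B"
      using priestley_clopen_nbhd[of "A \<inter> B" x] by (meson openin_Int IntI)
    have "K \<times> K \<subseteq> A \<times> B" using K(4) by auto
    then have "K \<times> K \<subseteq> E" using AB(5) U(3) by (meson order_trans)
    then show "x \<in> \<Union>\<K>" using K unfolding \<K>_def by blast
  qed
  have "openin T K" if "K \<in> \<K>" for K using that unfolding \<K>_def by blast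
  then obtain \<V> where "finite \<V>" "\<V> \<subseteq> \<K>" "topspace T \<subseteq> \<Union>\<V>"
    using compactinD[OF priestley_compact[unfolded compact_space_def] _ cover] by blast
  then show thesis using that unfolding \<K>_def by blast
qed

lemma priestley_entourage_coding:
  assumes "sym_entourage T E"
  obtains p :: "'a \<Rightarrow> 'a set set"
  where "finite (range p)" "\<And>b. openin T {x \<in> topspace T. p x = b}"
    "\<And>x y. x \<in> topspace T \<Longrightarrow> y \<in> topspace T \<Longrightarrow> p x = p y \<Longrightarrow> (x, y) \<in> E"
proof -
  obtain \<V> where \<V>: "finite \<V>" "topspace T \<subseteq> \<Union>\<V>"
    "\<And>K. K \<in> \<V> \<Longrightarrow> openin T K \<and> closedin T K \<and> K \<times> K \<subseteq> E"
    by (rule priestley_entourage_clopen_cover[OF assms]) blast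
  show thesis
  proof
    have clopen: "openin T K \<and> closedin T K" if "K \<in> \<V>" for K using \<V>(3)[OF that] by blast
    show "finite (range (\<lambda>x. {K \<in> \<V>. x \<in> K}))" by (rule clopen_cover_code(1)[OF \<V>(1) clopen])
    show "openin T {x \<in> topspace T. {K \<in> \<V>. x \<in> K} = b}" for b
      by (rule clopen_cover_code(2)[OF \<V>(1) clopen])
  next
    fix x y assume "x \<in> topspace T" "y \<in> topspace T" "{K \<in> \<V>. x \<in> K} = {K \<in> \<V>. y \<in> K}"
    then obtain K where "K \<in> \<V>" "x \<in> K" "y \<in> K" using \<V>(2) by blast
    then show "(x, y) \<in> E" using \<V>(3) by blast
  qed
qed

end

section \<open>Elementary growth estimates\<close>

lemma recurrence_bound:
  fixes a g :: "nat \<Rightarrow> real"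
  assumes m: "1 \<le> m" and a_nonneg: "\<And>n. 0 \<le> a n"
    and step: "\<And>n. m \<le> n \<Longrightarrow> a n \<le> g n + W * (a (n - m) + 1)"
    and base: "\<And>n. n < m \<Longrightarrow> a n \<le> g n + W"
    and g: "\<And>n. g n \<le> C * exp (\<rho> * n)"
    and W: "0 \<le> W" "W \<le> exp (\<rho> * m)" and \<rho>: "0 \<le> \<rho>" and C: "0 \<le> C"
  shows "a n \<le> (C + 1 + exp (\<rho> * m)) * (n + 1) * exp (\<rho> * n)"
proof (induction n rule: less_induct)
  case (less n)
  define K where "K = C + 1 + exp (\<rho> * m)"
  have e1: "1 \<le> exp (\<rho> * n)" using \<rho> by simp
  have K0: "0 \<le> K" unfolding K_def using C by (simp add: add_nonneg_nonneg)
  have "exp (\<rho> * m) \<le> exp (\<rho> * m) * exp (\<rho> * n)" using e1 by simp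
  moreover have "K * exp (\<rho> * n) = C * exp (\<rho> * n) + exp (\<rho> * n) + exp (\<rho> * m) * exp (\<rho> * n)"
    unfolding K_def by (simp add: algebra_simps)
  ultimately have gW: "g n + exp (\<rho> * m) \<le> K * exp (\<rho> * n)"
    using g[of n] e1 by linarith
  have "K * 1 \<le> K * (real n + 1)" using K0 by (intro mult_left_mono) auto
  then have K_grow: "K * exp (\<rho> * n) \<le> K * (real n + 1) * exp (\<rho> * n)"
    using mult_right_mono[of "K * 1" "K * (real n + 1)" "exp (\<rho> * n)"] by simp
  show ?case
  proof (cases "n < m")
    case True
    then show ?thesis using base[OF True] W(2) gW K_grow unfolding K_def by linarith
  next
    case False
    then have nm: "m \<le> n" by simp
    have IH: "a (n - m) \<le> K * (real (n - m) + 1) * exp (\<rho> * real (n - m))"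
      using less.IH[of "n - m"] m nm unfolding K_def by simp
    have exp_split: "exp (\<rho> * m) * exp (\<rho> * real (n - m)) = exp (\<rho> * n)"
      using nm by (simp add: exp_add[symmetric] algebra_simps of_nat_diff)
    have "W * (a (n - m) + 1) \<le> exp (\<rho> * m) * (K * (real (n - m) + 1) * exp (\<rho> * real (n - m)) + 1)"
      using W IH a_nonneg[of "n - m"] by (intro mult_mono) auto
    also have "\<dots> = K * (real (n - m) + 1) * exp (\<rho> * n) + exp (\<rho> * m)"
      using exp_split by (simp add: algebra_simps)
    finally have "a n \<le> K * exp (\<rho> * n) + K * (real (n - m) + 1) * exp (\<rho> * n)"
      using step[OF nm] gW by linarith
    also have "\<dots> \<le> K * (real n + 1) * exp (\<rho> * n)"
    proof -
      have "exp (\<rho> * n) \<le> real m * exp (\<rho> * n)" using m by simp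
      then have "K * exp (\<rho> * n) \<le> K * (real m * exp (\<rho> * n))" using K0 by (rule mult_left_mono)
      then show ?thesis using nm by (simp add: of_nat_diff algebra_simps)
    qed
    finally show ?thesis unfolding K_def .
  qed
qed

lemma linear_le_exp:
  assumes "0 < \<eta>"
  shows "real n + 1 \<le> (1 + 1 / \<eta>) * exp (\<eta> * n)"
proof -
  have "(1 + \<eta> * n) / \<eta> \<le> exp (\<eta> * n) / \<eta>"
    using assms exp_ge_add_one_self[of "\<eta> * n"] by (simp add: divide_right_mono)
  moreover have "(1 + \<eta> * n) / \<eta> = 1 / \<eta> + n" using assms by (simp add: field_simps)
  moreover have "(1 + 1 / \<eta>) * exp (\<eta> * n) = exp (\<eta> * n) + exp (\<eta> * n) / \<eta>"
    by (simp add: algebra_simps)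
  moreover have "1 \<le> exp (\<eta> * n)" "0 < 1 / \<eta>" using assms by simp_all
  ultimately show ?thesis by linarith
qed

lemma limsup_ln_over_n_eq_0:
  fixes s :: "nat \<Rightarrow> real"
  assumes s1: "\<And>n. 1 \<le> s n"
    and subexp: "\<And>\<epsilon>. 0 < \<epsilon> \<Longrightarrow> \<exists>C. \<forall>n. s n \<le> C * exp (\<epsilon> * n)"
  shows "limsup (\<lambda>n. ereal (ln (s n) / n)) = 0"
proof -
  have "(\<lambda>n. ln (s n) / n) \<longlonglongrightarrow> 0"
  proof (rule LIMSEQ_I)
    fix r :: real assume r: "0 < r"
    then obtain C where C: "\<And>n. s n \<le> C * exp (r / 2 * n)" using subexp[of "r / 2"] by auto
    have C1: "1 \<le> C" using C[of 0] s1[of 0] by simp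
    obtain N :: nat where N: "ln C < r / 2 * N"
      using reals_Archimedean3[of "r / 2"] r by (metis half_gt_zero mult.commute)
    have "norm (ln (s n) / n - 0) < r" if "Suc N \<le> n" for n
    proof -
      have n: "1 \<le> real n" using that by simp
      have "r / 2 * N \<le> r / 2 * n" using that r by (intro mult_left_mono) auto
      have "ln (s n) \<le> ln (C * exp (r / 2 * n))"
        using C[of n] s1[of n] by (subst ln_le_cancel_iff) auto
      also have "\<dots> = ln C + r / 2 * n" using C1 by (simp add: ln_mult)
      also have "\<dots> < r / 2 * n + r / 2 * n" using N \<open>r / 2 * N \<le> r / 2 * n\<close> by linarith
      also have "\<dots> = r * n" by simp
      finally have "ln (s n) < r * n" .
      moreover have "0 \<le> ln (s n)" using s1[of n] by simp
      ultimately show ?thesis using n by (simp add: divide_less_eq)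
    qed
    then show "\<exists>N. \<forall>n\<ge>N. norm (ln (s n) / n - 0) < r" by blast
  qed
  then have "(\<lambda>n. ereal (ln (s n) / n)) \<longlonglongrightarrow> ereal 0" by (rule tendsto_ereal)
  then show ?thesis
    using lim_imp_Limsup[OF trivial_limit_sequentially] by (metis zero_ereal_def)
qed

lemma exp_rate_between:
  fixes N c \<epsilon> :: real and m :: nat
  assumes "0 < m" "N < exp (c * m)" "0 \<le> \<epsilon>" "\<epsilon> < c"
  obtains \<rho> where "\<epsilon> \<le> \<rho>" "\<rho> < c" "N \<le> exp (\<rho> * m)"
proof -
  define M where "M = max 1 N"
  define \<rho> where "\<rho> = max \<epsilon> (ln M / m)"
  have "1 < exp (c * m)" using assms by simp
  then have "ln M < ln (exp (c * m))" unfolding M_def using assms(2) by (subst ln_less_cancel_iff) auto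
  then have "\<rho> < c" unfolding \<rho>_def using assms by (simp add: divide_less_eq)
  moreover have "N \<le> exp (ln M / m * m)" unfolding M_def using assms(1) by simp
  then have "N \<le> exp (\<rho> * m)"
    unfolding \<rho>_def by (rule order_trans) (intro exp_le_cancel_iff[THEN iffD2] mult_right_mono, auto)
  ultimately show thesis using that[of \<rho>] unfolding \<rho>_def by simp
qed

section \<open>Itineraries\<close>

fun itinerary :: "('a \<Rightarrow> 'b) \<Rightarrow> ('a \<Rightarrow> 'a) \<Rightarrow> 'a set \<Rightarrow> nat \<Rightarrow> 'a \<Rightarrow> 'b option list" where
  "itinerary p f I 0 x = []"
| "itinerary p f I (Suc n) x =
     Some (p x) # (if x \<in> I then replicate n None else itinerary p f I n (f x))"

lemma length_itinerary [simp]: "length (itinerary p f I n x) = n"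
  by (induction n arbitrary: x) auto

lemma take_itinerary: "m \<le> n \<Longrightarrow> take m (itinerary p f I n x) = itinerary p f I m x"
proof (induction n arbitrary: m x)
  case (Suc n)
  then show ?case by (cases m) auto
qed simp

definition forward_invariant :: "('a \<Rightarrow> 'a) \<Rightarrow> 'a set \<Rightarrow> 'a set \<Rightarrow> bool" where
  "forward_invariant f I Y \<longleftrightarrow> (\<forall>y\<in>Y. y \<notin> I \<longrightarrow> f y \<in> Y)"

lemma itinerary_add:
  assumes "forward_invariant f I Y" "x \<in> Y"
  shows "(\<exists>z\<in>Y. itinerary p f I (a + b) x = itinerary p f I a x @ itinerary p f I b z) \<or>
    itinerary p f I (a + b) x = itinerary p f I a x @ replicate b None"
  using assms(2)
proof (induction a arbitrary: x)
  case (Suc a)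
  show ?case
  proof (cases "x \<in> I")
    case False
    then have "f x \<in> Y" using assms(1) Suc.prems unfolding forward_invariant_def by blast
    with Suc.IH[OF this] False show ?thesis by auto
  qed (simp add: replicate_add)
qed auto

lemma xi_subset_topspace: "xi T f I n \<subseteq> topspace T"
  by (induction n) auto

lemma nth_itinerary_xi:
  assumes "x \<in> xi T f I n" "i \<le> n"
  shows "(f ^^ i) x \<in> topspace T \<and> itinerary p f I (Suc n) x ! i = Some (p ((f ^^ i) x))"
  using assms
proof (induction n arbitrary: x i)
  case (Suc n)
  then have x: "x \<in> topspace T" "x \<notin> I" "f x \<in> xi T f I n" by auto
  show ?case
  proof (cases i)
    case (Suc j)
    then have "(f ^^ j) (f x) \<in> topspace T \<and> itinerary p f I (Suc n) (f x) ! j = Some (p ((f ^^ j) (f x)))"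
      using Suc.IH[OF x(3)] Suc.prems by simp
    then show ?thesis using Suc x(2) by (simp add: funpow_swap1)
  qed (use x in simp)
qed simp

lemma Inter_chain_minimal:
  assumes "\<A> \<noteq> {}"
    and "\<And>\<C>. \<C> \<noteq> {} \<Longrightarrow> subset.chain \<A> \<C> \<Longrightarrow> \<Inter>\<C> \<in> \<A>"
  shows "\<exists>M\<in>\<A>. \<forall>X\<in>\<A>. X \<subseteq> M \<longrightarrow> X = M"
proof (rule predicate_Zorn)
  show "partial_order_on \<A> (relation_of (\<supseteq>) \<A>)"
    by (rule partial_order_on_relation_ofI) auto
next
  fix \<C> assume "\<C> \<in> Chains (relation_of (\<supseteq>) \<A>)"
  then have chain: "subset.chain \<A> \<C>"
    unfolding Chains_def relation_of_def subset_chain_def by blast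
  show "\<exists>U\<in>\<A>. \<forall>X\<in>\<C>. U \<subseteq> X"
  proof (cases "\<C> = {}")
    case False
    then show ?thesis using assms(2)[OF False chain] by blast
  qed (use assms(1) in auto)
qed

locale coded_partial_map =
  fixes T :: "'a topology" and f :: "'a \<Rightarrow> 'a" and I :: "'a set" and p :: "'a \<Rightarrow> 'b"
  assumes compact: "compact_space T"
    and open_I: "openin T I" and closed_I: "closedin T I"
    and continuous: "continuous_map (subtopology T (topspace T - I)) T f"
    and finite_code: "finite (range p)"
    and open_code_level: "\<And>b. openin T {x \<in> topspace T. p x = b}"
begin

abbreviation "X \<equiv> topspace T"
abbreviation "itin \<equiv> itinerary p f I"

definition num_itineraries :: "nat \<Rightarrow> 'a set \<Rightarrow> nat" where
  "num_itineraries n S = card (itin n ` S)"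

definition growth_le :: "real \<Rightarrow> 'a set \<Rightarrow> bool" where
  "growth_le \<rho> S \<longleftrightarrow> (\<exists>C. \<forall>n. real (num_itineraries n S) \<le> C * exp (\<rho> * n))"

lemma finite_itineraries: "finite (itin n ` S)"
proof -
  have "set (itin n x) \<subseteq> insert None (Some ` range p)" for x
    by (induction n arbitrary: x) auto
  then have "itin n ` S \<subseteq> {w. set w \<subseteq> insert None (Some ` range p) \<and> length w = n}"
    by auto
  moreover have "finite {w. set w \<subseteq> insert None (Some ` range p) \<and> length w = n}"
    using finite_code by (intro finite_lists_length_eq) auto
  ultimately show ?thesis by (rule finite_subset)
qed

lemma map_in_topspace: "x \<in> X \<Longrightarrow> x \<notin> I \<Longrightarrow> f x \<in> X"
  using continuous unfolding continuous_map_def by auto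

lemma openin_preimage:
  assumes "openin T U"
  shows "openin T {x \<in> X - I. f x \<in> U}"
proof -
  have "openin (subtopology T (X - I)) {x \<in> topspace (subtopology T (X - I)). f x \<in> U}"
    by (rule openin_continuous_map_preimage[OF continuous assms])
  moreover have "openin T (X - I)" using closed_I by (simp add: openin_diff)
  ultimately show ?thesis using openin_trans_full by (simp add: Int_absorb1)
qed

lemma openin_itinerary_level: "openin T {x \<in> X. itin n x = w}"
proof (induction n arbitrary: w)
  case 0
  then show ?case by (cases w) auto
next
  case (Suc n)
  show ?case
  proof (cases w)
    case (Cons a w')
    have "{x \<in> X. itin (Suc n) x = w} = {x \<in> X. Some (p x) = a} \<inter>
        ({x \<in> I. replicate n None = w'} \<union> {x \<in> X - I. f x \<in> {y \<in> X. itin n y = w'}})"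
      using Cons closedin_subset[OF closed_I] map_in_topspace by auto
    moreover have "openin T {x \<in> X. Some (p x) = a}"
      using open_code_level by (cases a) auto
    moreover have "openin T {x \<in> I. replicate n None = w'}"
      using open_I by (cases "replicate n None = w'") auto
    ultimately show ?thesis
      using openin_preimage[OF Suc.IH] by (simp add: openin_Int openin_Un)
  qed simp
qed

lemma openin_itinerary_levels: "openin T {x \<in> X. itin n x \<in> W}"
proof -
  have "{x \<in> X. itin n x \<in> W} = (\<Union>w\<in>W. {x \<in> X. itin n x = w})" by auto
  then show ?thesis using openin_itinerary_level by (auto intro!: openin_Union)
qed

lemma closedin_itinerary_level: "closedin T {x \<in> X. itin n x = w}"
proof -
  have "X - {x \<in> X. itin n x = w} = {x \<in> X. itin n x \<in> - {w}}" by auto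
  then show ?thesis using openin_itinerary_levels[of n "- {w}"] unfolding closedin_def by auto
qed

lemma num_itineraries_mono: "S \<subseteq> S' \<Longrightarrow> num_itineraries n S \<le> num_itineraries n S'"
  unfolding num_itineraries_def by (intro card_mono finite_itineraries image_mono)

lemma num_itineraries_Un: "num_itineraries n (A \<union> B) \<le> num_itineraries n A + num_itineraries n B"
  unfolding num_itineraries_def by (simp add: image_Un card_Un_le)

lemma num_itineraries_0: "num_itineraries 0 S = (if S = {} then 0 else 1)"
  unfolding num_itineraries_def by (auto simp: image_constant_conv)

lemma growth_le_nonneg_constant:
  assumes "growth_le \<rho> S"
  obtains C where "0 \<le> C" "\<And>n. real (num_itineraries n S) \<le> C * exp (\<rho> * n)"
proof -
  obtain C where C: "\<And>n. real (num_itineraries n S) \<le> C * exp (\<rho> * n)"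
    using assms unfolding growth_le_def by blast
  moreover have "0 \<le> C" using C[of 0] by simp
  ultimately show thesis using that by blast
qed

lemma growth_le_subset: "growth_le \<rho> S' \<Longrightarrow> S \<subseteq> S' \<Longrightarrow> growth_le \<rho> S"
  unfolding growth_le_def using num_itineraries_mono by (meson of_nat_le_iff order_trans)

lemma growth_le_rate_mono:
  assumes "growth_le \<rho> S" "\<rho> \<le> \<rho>'"
  shows "growth_le \<rho>' S"
proof -
  obtain C where C: "0 \<le> C" "\<And>n. real (num_itineraries n S) \<le> C * exp (\<rho> * n)"
    using growth_le_nonneg_constant[OF assms(1)] by blast
  have "C * exp (\<rho> * n) \<le> C * exp (\<rho>' * n)" for n :: nat
    using C(1) assms(2) by (auto intro!: mult_left_mono mult_right_mono)
  then show ?thesis unfolding growth_le_def using C(2) by (meson order_trans)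
qed

lemma growth_le_Un:
  assumes "growth_le \<rho> A" "growth_le \<rho> B"
  shows "growth_le \<rho> (A \<union> B)"
proof -
  obtain C D where C: "\<And>n. real (num_itineraries n A) \<le> C * exp (\<rho> * n)"
    and D: "\<And>n. real (num_itineraries n B) \<le> D * exp (\<rho> * n)"
    using assms unfolding growth_le_def by blast
  have "real (num_itineraries n (A \<union> B)) \<le> (C + D) * exp (\<rho> * n)" for n
    using num_itineraries_Un[of n A B] C[of n] D[of n] by (simp add: algebra_simps)
  then show ?thesis unfolding growth_le_def by blast
qed

lemma growth_le_empty: "growth_le \<rho> {}"
  unfolding growth_le_def num_itineraries_def by (rule exI[of _ 0]) simp

lemma growth_le_Union: "finite \<V> \<Longrightarrow> (\<And>V. V \<in> \<V> \<Longrightarrow> growth_le \<rho> V) \<Longrightarrow> growth_le \<rho> (\<Union>\<V>)"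
  by (induction rule: finite_induct) (auto intro: growth_le_Un growth_le_empty)

lemma growth_le_singleton: "0 \<le> \<rho> \<Longrightarrow> growth_le \<rho> {y}"
  unfolding growth_le_def num_itineraries_def by (rule exI[of _ 1]) simp

lemma growth_le_linear_factor:
  assumes "\<And>n. real (num_itineraries n S) \<le> K * (real n + 1) * exp (\<rho> * n)" "0 < \<eta>" "0 \<le> K"
  shows "growth_le (\<rho> + \<eta>) S"
proof -
  have "real (num_itineraries n S) \<le> (K * (1 + 1 / \<eta>)) * exp ((\<rho> + \<eta>) * n)" for n
  proof -
    have "K * (real n + 1) * exp (\<rho> * n) \<le> K * ((1 + 1 / \<eta>) * exp (\<eta> * n)) * exp (\<rho> * n)"
      using linear_le_exp[OF assms(2), of n] assms(3) by (intro mult_right_mono mult_left_mono) auto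
    also have "\<dots> = (K * (1 + 1 / \<eta>)) * exp ((\<rho> + \<eta>) * n)"
      by (simp add: algebra_simps exp_add)
    finally show ?thesis using assms(1)[of n] by linarith
  qed
  then show ?thesis unfolding growth_le_def by blast
qed

lemma num_itineraries_Suc:
  assumes "\<And>x. x \<in> S \<Longrightarrow> x \<notin> I \<and> f x \<in> S'"
  shows "num_itineraries (Suc n) S \<le> card (range p) * num_itineraries n S'"
proof -
  have "itin (Suc n) ` S \<subseteq> (\<lambda>(b, w). Some b # w) ` (range p \<times> itin n ` S')"
    using assms by (auto intro!: image_eqI)
  then have "num_itineraries (Suc n) S \<le> card ((\<lambda>(b, w). Some b # w) ` (range p \<times> itin n ` S'))"
    unfolding num_itineraries_def
    by (intro card_mono) (auto intro!: finite_imageI finite_itineraries finite_code)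
  also have "\<dots> \<le> card (range p \<times> itin n ` S')"
    by (rule card_image_le) (auto intro!: finite_itineraries finite_code)
  finally show ?thesis by (simp add: card_cartesian_product num_itineraries_def)
qed

lemma growth_le_preimage:
  assumes "growth_le \<rho> S'" "0 \<le> \<rho>" "\<And>x. x \<in> S \<Longrightarrow> x \<notin> I \<and> f x \<in> S'"
  shows "growth_le \<rho> S"
proof -
  obtain C where C: "0 \<le> C" "\<And>n. real (num_itineraries n S') \<le> C * exp (\<rho> * n)"
    using growth_le_nonneg_constant[OF assms(1)] by blast
  define k where "k = real (card (range p))"
  have "real (num_itineraries n S) \<le> (1 + k * C) * exp (\<rho> * n)" for n
  proof (cases n)
    case 0
    have "0 \<le> k * C" using C(1) unfolding k_def by simp
    then show ?thesis using 0 by (simp add: num_itineraries_0)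
  next
    case (Suc n')
    have "real (num_itineraries n S) \<le> k * real (num_itineraries n' S')"
      using num_itineraries_Suc[where n=n', OF assms(3)] Suc unfolding k_def by (metis of_nat_le_iff of_nat_mult)
    also have "\<dots> \<le> k * (C * exp (\<rho> * n))"
      using C assms(2) Suc unfolding k_def
      by (intro mult_left_mono order_trans[OF C(2)]) (auto intro: mult_left_mono)
    also have "\<dots> \<le> (1 + k * C) * exp (\<rho> * n)" by (simp add: algebra_simps)
    finally show ?thesis .
  qed
  then show ?thesis unfolding growth_le_def by blast
qed

lemma num_itineraries_block_step:
  assumes fwd: "forward_invariant f I Y" and cover: "Y \<subseteq> G \<union> {y. itin m y \<in> W}"
    and W: "finite W" and "m \<le> n"
  shows "num_itineraries n Y \<le> num_itineraries n G + card W * (num_itineraries (n - m) Y + 1)"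
proof -
  obtain j where j: "n = m + j" using \<open>m \<le> n\<close> le_Suc_ex by blast
  define tails where "tails = insert (replicate j None) (itin j ` Y)"
  have "itin n ` Y \<subseteq> itin n ` G \<union> (\<lambda>(u, v). u @ v) ` (W \<times> tails)"
  proof
    fix w assume "w \<in> itin n ` Y"
    then obtain y where y: "y \<in> Y" "w = itin n y" by blast
    show "w \<in> itin n ` G \<union> (\<lambda>(u, v). u @ v) ` (W \<times> tails)"
    proof (cases "y \<in> G")
      case False
      then have "itin m y \<in> W" using cover y by blast
      moreover obtain v where "v \<in> tails" "itin n y = itin m y @ v"
        using itinerary_add[OF fwd y(1), of p m j] j unfolding tails_def by auto
      ultimately show ?thesis using y by force
    qed (use y in blast)
  qed
  then have "num_itineraries n Y \<le> card (itin n ` G \<union> (\<lambda>(u, v). u @ v) ` (W \<times> tails))"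
    unfolding num_itineraries_def
    by (intro card_mono) (auto simp: tails_def intro!: finite_itineraries W)
  also have "\<dots> \<le> num_itineraries n G + card ((\<lambda>(u, v). u @ v) ` (W \<times> tails))"
    unfolding num_itineraries_def by (rule card_Un_le)
  also have "card ((\<lambda>(u, v). u @ v) ` (W \<times> tails)) \<le> card W * card tails"
    using card_image_le[of "W \<times> tails"] W by (simp add: card_cartesian_product tails_def finite_itineraries)
  also have "card tails \<le> num_itineraries j Y + 1"
    unfolding tails_def num_itineraries_def by (simp add: card_insert_if finite_itineraries)
  finally show ?thesis using j by (simp add: mult_le_mono2)
qed

lemma num_itineraries_block_base:
  assumes cover: "Y \<subseteq> G \<union> {y. itin m y \<in> W}" and W: "finite W" and "n \<le> m"
  shows "num_itineraries n Y \<le> num_itineraries n G + card W"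
proof -
  have "itin n ` Y \<subseteq> itin n ` G \<union> take n ` W"
  proof (rule image_subsetI)
    fix y assume "y \<in> Y"
    moreover have "itin n y = take n (itin m y)" by (rule take_itinerary[OF \<open>n \<le> m\<close>, symmetric])
    ultimately show "itin n y \<in> itin n ` G \<union> take n ` W" using cover by blast
  qed
  then have "num_itineraries n Y \<le> card (itin n ` G \<union> take n ` W)"
    unfolding num_itineraries_def by (intro card_mono) (auto intro!: finite_itineraries W)
  also have "\<dots> \<le> num_itineraries n G + card (take n ` W)"
    unfolding num_itineraries_def by (rule card_Un_le)
  also have "card (take n ` W) \<le> card W" by (rule card_image_le[OF W])
  finally show ?thesis by simp
qed

text \<open>An n-itinerary of a point outside G is an m-itinerary from W followed by an
  (n - m)-itinerary of Y (or by padding), which yields the recursion of recurrence_bound.\<close>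

lemma growth_le_block_cover:
  assumes fwd: "forward_invariant f I Y" and cover: "Y \<subseteq> G \<union> {y. itin m y \<in> W}"
    and W: "finite W" "real (card W) < exp (c * m)"
    and G: "growth_le \<epsilon> G" "0 \<le> \<epsilon>" "\<epsilon> < c"
  shows "\<exists>\<rho><c. growth_le \<rho> Y"
proof (cases "m = 0")
  case True
  then have "Y \<subseteq> G" using cover W by simp
  then show ?thesis using G growth_le_subset by blast
next
  case False
  then have "0 < m" by simp
  then obtain \<rho> where \<rho>: "\<epsilon> \<le> \<rho>" "\<rho> < c" "real (card W) \<le> exp (\<rho> * m)"
    using exp_rate_between[OF _ W(2) G(2,3)] by blast
  obtain C where C: "0 \<le> C" "\<And>n. real (num_itineraries n G) \<le> C * exp (\<rho> * n)"
    using growth_le_nonneg_constant[OF growth_le_rate_mono[OF G(1) \<rho>(1)]] by blast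
  have "real (num_itineraries n Y) \<le> (C + 1 + exp (\<rho> * m)) * (real n + 1) * exp (\<rho> * n)" for n
  proof (rule recurrence_bound[where g="\<lambda>n. real (num_itineraries n G)"])
    show "real (num_itineraries n Y)
        \<le> real (num_itineraries n G) + real (card W) * (real (num_itineraries (n - m) Y) + 1)"
      if "m \<le> n" for n
    proof -
      have "real (num_itineraries n Y)
          \<le> real (num_itineraries n G + card W * (num_itineraries (n - m) Y + 1))"
        using num_itineraries_block_step[OF fwd cover W(1) that] by (simp only: of_nat_le_iff)
      then show ?thesis by (simp add: algebra_simps)
    qed
    show "real (num_itineraries n Y) \<le> real (num_itineraries n G) + real (card W)"
      if "n < m" for n
      using num_itineraries_block_base[OF cover W(1)] that by (simp flip: of_nat_add)
  qed (use False \<rho> C G(2) in auto)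
  then have "growth_le (\<rho> + (c - \<rho>) / 2) Y"
    by (rule growth_le_linear_factor) (use \<rho> C(1) in auto)
  moreover have "\<rho> + (c - \<rho>) / 2 < c" using \<rho>(2) by (simp add: field_simps)
  ultimately show ?thesis by blast
qed

definition itin_rich :: "real \<Rightarrow> 'a set set" where
  "itin_rich c = {Y. closedin T Y \<and> forward_invariant f I Y \<and>
     (\<forall>m. exp (c * m) \<le> real (num_itineraries m Y))}"

lemma itin_rich_not_growth_le:
  assumes "Y \<in> itin_rich c" "\<rho> < c"
  shows "\<not> growth_le \<rho> Y"
proof
  assume "growth_le \<rho> Y"
  then obtain C where C: "0 \<le> C" "\<And>n. real (num_itineraries n Y) \<le> C * exp (\<rho> * n)"
    using growth_le_nonneg_constant by blast
  obtain n :: nat where n: "C / (c - \<rho>) < n" using reals_Archimedean2 by blast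
  have "exp (c * n) \<le> real (num_itineraries n Y)" using assms(1) unfolding itin_rich_def by blast
  moreover have "exp (c * n) = exp (n * (c - \<rho>)) * exp (\<rho> * n)"
    by (simp add: algebra_simps flip: exp_add)
  ultimately have "exp (n * (c - \<rho>)) * exp (\<rho> * n) \<le> C * exp (\<rho> * n)"
    using C(2)[of n] by linarith
  then have "exp (n * (c - \<rho>)) \<le> C" by simp
  moreover have "1 + n * (c - \<rho>) \<le> exp (n * (c - \<rho>))" by (rule exp_ge_add_one_self)
  moreover have "C < n * (c - \<rho>)" using n assms(2) by (simp add: pos_divide_less_eq)
  ultimately show False by linarith
qed

lemma itinerary_in_Inter_chain:
  assumes "\<C> \<noteq> {}" "subset.chain \<A> \<C>" "\<And>Y. Y \<in> \<C> \<Longrightarrow> closedin T Y"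
    and "\<And>Y. Y \<in> \<C> \<Longrightarrow> w \<in> itin m ` Y"
  shows "w \<in> itin m ` \<Inter>\<C>"
proof -
  define L where "L = {x \<in> X. itin m x = w}"
  have comparable: "X \<subseteq> Y \<or> Y \<subseteq> X" if "X \<in> \<C>" "Y \<in> \<C>" for X Y
    using assms(2) that unfolding subset_chain_def by blast
  have "\<Inter>((\<lambda>Y. Y \<inter> L) ` \<C>) \<noteq> {}"
  proof (rule compact_space_fip[THEN iffD1, OF compact, rule_format], intro conjI allI impI ballI)
    fix C assume "C \<in> (\<lambda>Y. Y \<inter> L) ` \<C>"
    then obtain Y where "Y \<in> \<C>" "C = Y \<inter> L" by blast
    then show "closedin T C"
      using assms(3) closedin_itinerary_level unfolding L_def by (simp add: closedin_Int)
  next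
    fix \<F> assume "finite \<F> \<and> \<F> \<subseteq> (\<lambda>Y. Y \<inter> L) ` \<C>"
    then obtain \<C>' where \<C>': "\<C>' \<subseteq> \<C>" "finite \<C>'" "\<F> = (\<lambda>Y. Y \<inter> L) ` \<C>'"
      by (meson finite_subset_image)
    show "\<Inter>\<F> \<noteq> {}"
    proof (cases "\<C>' = {}")
      case False
      have "subset.chain \<C>' \<C>'"
        unfolding subset_chain_def by (intro conjI order_refl ballI comparable) (use \<C>'(1) in blast)+
      then have "\<Inter>\<C>' \<in> \<C>'" by (rule Inter_in_chain[OF \<C>'(2) False])
      define Y0 where "Y0 = \<Inter>\<C>'"
      have Y0: "Y0 \<in> \<C>'" "\<And>Y. Y \<in> \<C>' \<Longrightarrow> Y0 \<subseteq> Y"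
        using \<open>\<Inter>\<C>' \<in> \<C>'\<close> unfolding Y0_def by (auto simp: Inter_lower)
      then have "Y0 \<in> \<C>" using \<C>'(1) by blast
      then obtain y where y: "y \<in> Y0" "itin m y = w" using assms(4) by blast
      have "y \<in> X" using y(1) assms(3)[OF \<open>Y0 \<in> \<C>\<close>] closedin_subset by blast
      then have "y \<in> Y \<inter> L" if "Y \<in> \<C>'" for Y
        using Y0(2)[OF that] y unfolding L_def by blast
      then show ?thesis unfolding \<C>'(3) by blast
    qed (use \<C>'(3) in simp)
  qed
  then obtain y where "\<And>Y. Y \<in> \<C> \<Longrightarrow> y \<in> Y \<inter> L" by blast
  then have "y \<in> \<Inter>\<C>" "itin m y = w" using assms(1) unfolding L_def by auto
  then show ?thesis by blast
qed

lemma itin_rich_chain_Inter: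
  assumes "\<C> \<noteq> {}" "subset.chain (itin_rich c) \<C>"
  shows "\<Inter>\<C> \<in> itin_rich c"
proof -
  have rich: "Y \<in> itin_rich c" if "Y \<in> \<C>" for Y
    using assms(2) that unfolding subset_chain_def by blast
  have closed: "closedin T Y" if "Y \<in> \<C>" for Y
    using rich[OF that] unfolding itin_rich_def by blast
  have "exp (c * m) \<le> real (num_itineraries m (\<Inter>\<C>))" for m
  proof -
    obtain Y0 where Y0: "Y0 \<in> \<C>" "\<And>Y. Y \<in> \<C> \<Longrightarrow> num_itineraries m Y0 \<le> num_itineraries m Y"
      using ex_has_least_nat[of "\<lambda>Y. Y \<in> \<C>" _ "num_itineraries m"] assms(1) by blast
    have "itin m ` Y0 \<subseteq> itin m ` Y" if "Y \<in> \<C>" for Y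
    proof (cases "Y0 \<subseteq> Y")
      case False
      then have "Y \<subseteq> Y0" using assms(2) Y0(1) that unfolding subset_chain_def by blast
      then have "itin m ` Y \<subseteq> itin m ` Y0" by (rule image_mono)
      moreover have "card (itin m ` Y0) \<le> card (itin m ` Y)"
        using Y0(2)[OF that] unfolding num_itineraries_def .
      ultimately have "itin m ` Y = itin m ` Y0" by (rule card_seteq[OF finite_itineraries])
      then show ?thesis by simp
    qed (rule image_mono)
    then have "w \<in> itin m ` \<Inter>\<C>" if "w \<in> itin m ` Y0" for w
      using that by (intro itinerary_in_Inter_chain[OF assms closed]) blast+
    then have "num_itineraries m Y0 \<le> num_itineraries m (\<Inter>\<C>)"
      unfolding num_itineraries_def by (intro card_mono finite_itineraries subsetI)
    moreover have "exp (c * m) \<le> real (num_itineraries m Y0)"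
      using rich[OF Y0(1)] unfolding itin_rich_def by blast
    ultimately show ?thesis by linarith
  qed
  moreover have "closedin T (\<Inter>\<C>)" using assms(1) closed by (rule closedin_Inter)
  moreover have "forward_invariant f I (\<Inter>\<C>)"
    using rich unfolding itin_rich_def forward_invariant_def by blast
  ultimately show ?thesis unfolding itin_rich_def by blast
qed

definition fast_points :: "real \<Rightarrow> 'a set \<Rightarrow> 'a set" where
  "fast_points \<epsilon> Y = {y \<in> Y. \<forall>V. openin T V \<and> y \<in> V \<longrightarrow> \<not> growth_le \<epsilon> (V \<inter> Y)}"

lemma closedin_fast_points:
  assumes "closedin T Y"
  shows "closedin T (fast_points \<epsilon> Y)"
proof -
  have "\<exists>U. openin T U \<and> x \<in> U \<and> U \<subseteq> X - fast_points \<epsilon> Y" if x: "x \<in> X - fast_points \<epsilon> Y" for x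
  proof (cases "x \<in> Y")
    case True
    then obtain V where V: "openin T V" "x \<in> V" "growth_le \<epsilon> (V \<inter> Y)"
      using x unfolding fast_points_def by blast
    have "V \<inter> fast_points \<epsilon> Y = {}" using V(1,3) unfolding fast_points_def by blast
    then show ?thesis using V(1,2) openin_subset[OF V(1)] by blast
  next
    case False
    then show ?thesis
      using x assms unfolding fast_points_def closedin_def by (intro exI[of _ "X - Y"]) auto
  qed
  then have "openin T (X - fast_points \<epsilon> Y)" by (subst openin_subopen) blast
  moreover have "fast_points \<epsilon> Y \<subseteq> X" using closedin_subset[OF assms] unfolding fast_points_def by blast
  ultimately show ?thesis unfolding closedin_def by blast
qed

lemma forward_invariant_fast_points:
  assumes "forward_invariant f I Y" "Y \<subseteq> X" "0 \<le> \<epsilon>"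
  shows "forward_invariant f I (fast_points \<epsilon> Y)"
  unfolding forward_invariant_def
proof (intro ballI impI)
  fix y assume y: "y \<in> fast_points \<epsilon> Y" "y \<notin> I"
  then have fy: "f y \<in> Y" using assms(1) unfolding fast_points_def forward_invariant_def by blast
  show "f y \<in> fast_points \<epsilon> Y"
  proof (rule ccontr)
    assume "f y \<notin> fast_points \<epsilon> Y"
    then obtain W where W: "openin T W" "f y \<in> W" "growth_le \<epsilon> (W \<inter> Y)"
      using fy unfolding fast_points_def by blast
    have "growth_le \<epsilon> ({x \<in> X - I. f x \<in> W} \<inter> Y)"
      by (rule growth_le_preimage[OF W(3) assms(3)]) (use assms(1) in \<open>auto simp: forward_invariant_def\<close>)
    moreover have "y \<in> {x \<in> X - I. f x \<in> W}"
      using assms(2) y W(2) unfolding fast_points_def by blast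
    ultimately show False
      using y(1) openin_preimage[OF W(1)] unfolding fast_points_def by blast
  qed
qed

lemma fast_points_itin_rich:
  assumes Y: "Y \<in> itin_rich c" and \<epsilon>: "0 \<le> \<epsilon>" "\<epsilon> < c"
  shows "fast_points \<epsilon> Y \<in> itin_rich c"
proof -
  have Y_closed: "closedin T Y" and Y_fwd: "forward_invariant f I Y"
    using Y unfolding itin_rich_def by blast+
  have YX: "Y \<subseteq> X" using closedin_subset[OF Y_closed] .
  have "exp (c * m) \<le> real (num_itineraries m (fast_points \<epsilon> Y))" for m
  proof (rule ccontr)
    assume few: "\<not> ?thesis"
    define W where "W = itin m ` fast_points \<epsilon> Y"
    define K where "K = Y - {x \<in> X. itin m x \<in> W}"
    have "compactin T K"
      unfolding K_def using Y_closed openin_itinerary_levels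
      by (intro closedin_compact_space[OF compact] closedin_diff)
    moreover have "K \<subseteq> \<Union>{V. openin T V \<and> growth_le \<epsilon> (V \<inter> Y)}"
      unfolding K_def W_def fast_points_def using YX by blast
    ultimately obtain \<V> where \<V>: "finite \<V>" "\<V> \<subseteq> {V. openin T V \<and> growth_le \<epsilon> (V \<inter> Y)}" "K \<subseteq> \<Union>\<V>"
      using compactinD[of T K] by (metis (no_types, lifting) mem_Collect_eq)
    define G where "G = (\<Union>V\<in>\<V>. V \<inter> Y)"
    have "growth_le \<epsilon> G" unfolding G_def using \<V>(1,2) by (intro growth_le_Union) auto
    moreover have "Y \<subseteq> G \<union> {y. itin m y \<in> W}" using \<V>(3) YX unfolding G_def K_def by blast
    moreover have "real (card W) < exp (c * m)" using few unfolding W_def num_itineraries_def by simp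
    ultimately have "\<exists>\<rho><c. growth_le \<rho> Y"
      using \<epsilon> by (intro growth_le_block_cover[OF Y_fwd _ finite_itineraries]) (simp_all add: W_def)
    then show False using itin_rich_not_growth_le[OF Y] by blast
  qed
  moreover have "closedin T (fast_points \<epsilon> Y)" by (rule closedin_fast_points[OF Y_closed])
  moreover have "forward_invariant f I (fast_points \<epsilon> Y)"
    by (rule forward_invariant_fast_points[OF Y_fwd YX \<epsilon>(1)])
  ultimately show ?thesis unfolding itin_rich_def by blast
qed

lemma itin_rich_empty:
  assumes "scattered_space T" "0 < c"
  shows "itin_rich c = {}"
proof (rule ccontr)
  assume "itin_rich c \<noteq> {}"
  then obtain Y where Y: "Y \<in> itin_rich c" and Y_min: "\<forall>Y'\<in>itin_rich c. Y' \<subseteq> Y \<longrightarrow> Y' = Y"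
    using Inter_chain_minimal[of "itin_rich c"] itin_rich_chain_Inter by blast
  have "fast_points (c / 2) Y \<in> itin_rich c"
    by (rule fast_points_itin_rich[OF Y]) (use assms(2) in auto)
  moreover have "fast_points (c / 2) Y \<subseteq> Y" unfolding fast_points_def by blast
  ultimately have fast: "fast_points (c / 2) Y = Y" using Y_min by blast
  have "closedin T Y" and rich: "\<forall>m. exp (c * m) \<le> real (num_itineraries m Y)"
    using Y unfolding itin_rich_def by blast+
  moreover have "Y \<noteq> {}" using rich[rule_format, of 0] by (auto simp: num_itineraries_0)
  ultimately obtain y V where V: "openin T V" "V \<inter> Y = {y}"
    using assms(1) unfolding scattered_space_def by blast
  then have "y \<in> fast_points (c / 2) Y" using fast by blast
  then have "\<not> growth_le (c / 2) (V \<inter> Y)" using V unfolding fast_points_def by blast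
  moreover have "growth_le (c / 2) {y}" using assms(2) by (simp add: growth_le_singleton)
  ultimately show False using V(2) by simp
qed

theorem growth_le_topspace:
  assumes "scattered_space T" "0 < \<epsilon>"
  shows "growth_le \<epsilon> X"
proof -
  have fwd: "forward_invariant f I X" using map_in_topspace unfolding forward_invariant_def by blast
  have "X \<notin> itin_rich \<epsilon>" using itin_rich_empty[OF assms] by blast
  then obtain m where "\<not> exp (\<epsilon> * m) \<le> real (num_itineraries m X)"
    using fwd closedin_topspace[of T] unfolding itin_rich_def by blast
  then have "real (card (itin m ` X)) < exp (\<epsilon> * m)" unfolding num_itineraries_def by simp
  then have "\<exists>\<rho><\<epsilon>. growth_le \<rho> X"
    by (intro growth_le_block_cover[OF fwd _ finite_itineraries _ growth_le_empty]) (use assms(2) in auto)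
  then show ?thesis using growth_le_rate_mono by auto
qed

section \<open>Topological entropy\<close>

lemma sep_num_ge_one:
  assumes "xi T f I n \<noteq> {}"
  shows "1 \<le> sep_num T f I n E"
proof -
  obtain x where "x \<in> xi T f I n" using assms by blast
  then have "ereal (real (card {x})) \<le> sep_num T f I n E"
    unfolding sep_num_def by (intro Sup_upper CollectI exI[of _ "{x}"]) (simp add: \<open>x \<in> xi T f I n\<close>)
  then show ?thesis by (simp add: one_ereal_def)
qed

lemma inj_on_itinerary_separated:
  assumes code_E: "\<And>x y. x \<in> X \<Longrightarrow> y \<in> X \<Longrightarrow> p x = p y \<Longrightarrow> (x, y) \<in> E"
    and F: "F \<subseteq> xi T f I n" "\<forall>x\<in>F. \<forall>y\<in>F. x \<noteq> y \<longrightarrow> x \<notin> bowen_ball T f I n E y"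
  shows "inj_on (itin (Suc n)) F"
proof (rule inj_onI, rule ccontr)
  fix x y assume xy: "x \<in> F" "y \<in> F" "itin (Suc n) x = itin (Suc n) y" "x \<noteq> y"
  have x: "x \<in> xi T f I n" and y: "y \<in> xi T f I n" using xy(1,2) F(1) by blast+
  have "((f ^^ i) y, (f ^^ i) x) \<in> E" if "i \<le> n" for i
  proof -
    have "(f ^^ i) x \<in> X" "itin (Suc n) x ! i = Some (p ((f ^^ i) x))"
      using nth_itinerary_xi[OF x that, where p=p] by blast+
    moreover have "(f ^^ i) y \<in> X" "itin (Suc n) y ! i = Some (p ((f ^^ i) y))"
      using nth_itinerary_xi[OF y that, where p=p] by blast+
    ultimately show ?thesis using code_E xy(3) by (metis option.inject)
  qed
  then have "x \<in> bowen_ball T f I n E y" using x unfolding bowen_ball_def by blast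
  then show False using F(2) xy by blast
qed

lemma sep_num_le_num_itineraries:
  assumes "\<And>x y. x \<in> X \<Longrightarrow> y \<in> X \<Longrightarrow> p x = p y \<Longrightarrow> (x, y) \<in> E"
  shows "sep_num T f I n E \<le> ereal (real (num_itineraries (Suc n) X))"
  unfolding sep_num_def
proof (rule Sup_least)
  fix a assume "a \<in> {ereal (real (card F)) | F. finite F \<and> F \<subseteq> xi T f I n \<and>
      (\<forall>x\<in>F. \<forall>y\<in>F. x \<noteq> y \<longrightarrow> x \<notin> bowen_ball T f I n E y)}"
  then obtain F where a: "a = ereal (real (card F))" and F: "F \<subseteq> xi T f I n"
    "\<forall>x\<in>F. \<forall>y\<in>F. x \<noteq> y \<longrightarrow> x \<notin> bowen_ball T f I n E y"
    by (elim CollectE exE conjE) (rule that)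
  have inj: "inj_on (itin (Suc n)) F" by (rule inj_on_itinerary_separated[OF assms F])
  have "F \<subseteq> X" by (rule order_trans[OF F(1) xi_subset_topspace])
  then have "itin (Suc n) ` F \<subseteq> itin (Suc n) ` X" by (rule image_mono)
  then have "card (itin (Suc n) ` F) \<le> num_itineraries (Suc n) X"
    unfolding num_itineraries_def by (rule card_mono[OF finite_itineraries])
  then show "a \<le> ereal (real (num_itineraries (Suc n) X))" using card_image[OF inj] a by simp
qed

lemma limsup_growth_term_eq_0:
  assumes "scattered_space T"
    and "\<And>x y. x \<in> X \<Longrightarrow> y \<in> X \<Longrightarrow> p x = p y \<Longrightarrow> (x, y) \<in> E"
    and "\<forall>n. xi T f I n \<noteq> {}"
  shows "limsup (growth_term T f I E) = 0"
proof -
  define s where "s n = real_of_ereal (sep_num T f I n E)" for n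
  have sep_ge: "1 \<le> sep_num T f I n E" for n
    by (rule sep_num_ge_one) (use assms(3) in blast)
  have sep_le: "sep_num T f I n E \<le> ereal (real (num_itineraries (Suc n) X))" for n
    by (rule sep_num_le_num_itineraries[OF assms(2)])
  have "\<bar>sep_num T f I n E\<bar> \<noteq> \<infinity>" for n
    using sep_ge[of n] sep_le[of n] by auto
  then have sep_eq: "sep_num T f I n E = ereal (s n)" for n
    unfolding s_def by (simp add: ereal_real')
  have s: "1 \<le> s n" "s n \<le> num_itineraries (Suc n) X" for n
    using sep_ge[of n] sep_le[of n] by (simp_all add: sep_eq)
  have "growth_term T f I E = (\<lambda>n. ereal (ln (s n) / n))"
    by (simp add: fun_eq_iff growth_term_def sep_eq)
  moreover have "\<exists>C. \<forall>n. s n \<le> C * exp (\<epsilon> * n)" if \<epsilon>: "0 < \<epsilon>" for \<epsilon>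
  proof -
    obtain C where C: "\<And>n. real (num_itineraries n X) \<le> C * exp (\<epsilon> * n)"
      using growth_le_topspace[OF assms(1) \<epsilon>] unfolding growth_le_def by blast
    have "s n \<le> (C * exp \<epsilon>) * exp (\<epsilon> * n)" for n
    proof -
      have "s n \<le> C * exp (\<epsilon> * Suc n)" using s(2)[of n] C[of "Suc n"] by linarith
      also have "\<dots> = (C * exp \<epsilon>) * exp (\<epsilon> * n)" by (simp add: algebra_simps flip: exp_add)
      finally show ?thesis .
    qed
    then show ?thesis by blast
  qed
  then have "limsup (\<lambda>n. ereal (ln (s n) / n)) = 0"
    using s(1) by (intro limsup_ln_over_n_eq_0)
  ultimately show ?thesis by simp
qed

end

theorem theorem3p9:
  fixes T :: "'a topology" and le :: "'a \<Rightarrow> 'a \<Rightarrow> bool" and f :: "'a \<Rightarrow> 'a" and I :: "'a set"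
  assumes "priestley_space T le"
    and "noetherian_space T le"
    and "partially_continuous T f I"
    and "openin T I" and "closedin T I"
    and "\<forall>n. xi T f I n \<noteq> {}"
  shows "htop T f I = 0"
proof -
  have scattered: "scattered_space T" by (rule noetherian_priestley_scattered[OF assms(1,2)])
  have limsup_0: "limsup (growth_term T f I E) = 0" if E: "sym_entourage T E" for E
  proof -
    obtain p :: "'a \<Rightarrow> 'a set set" where p: "finite (range p)" "\<And>b. openin T {x \<in> topspace T. p x = b}"
      "\<And>x y. x \<in> topspace T \<Longrightarrow> y \<in> topspace T \<Longrightarrow> p x = p y \<Longrightarrow> (x, y) \<in> E"
      by (rule priestley_entourage_coding[OF assms(1) E]) blast
    have "coded_partial_map T f I p"
      using priestley_compact[OF assms(1)] assms(3-5) p(1,2)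
      unfolding partially_continuous_def coded_partial_map_def by blast
    then show ?thesis by (rule coded_partial_map.limsup_growth_term_eq_0[OF _ scattered p(3) assms(6)])
  qed
  have "openin (prod_topology T T) (topspace T \<times> topspace T)"
    using openin_topspace[of "prod_topology T T"] by simp
  then have "sym_entourage T (topspace T \<times> topspace T)"
    unfolding sym_entourage_def by blast
  then have "{E. sym_entourage T E} \<noteq> {}" by blast
  then have "(SUP E \<in> {E. sym_entourage T E}. limsup (growth_term T f I E)) = 0"
    using limsup_0 by (simp add: SUP_const)
  then show ?thesis unfolding htop_def using assms(6) by simp
qed

end
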